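(* Let $0<\epsilon<0.5$ and let $n,s,s_0\in\mathbb{N}$ with $s_0\mid n$ and $n\ge s>2s_0$. If $\boldsymbol{c}\in\Sigma_{\rm DNA}^n$ is GC-$(s_0,\epsilon)$-partition balanced, then $\boldsymbol{c}$ is GC-$(s,\delta)$-locally balanced with $$\delta=\frac{(s_0-1)(1-2\epsilon)}{s}+\epsilon.$$ Consequently every GC-$(s_0,\epsilon)$-partition balanced code of length $n$ is GC-$(s,\delta)$-locally balanced.
   Context: For $\boldsymbol{x}\in\Sigma_{\rm DNA}^n$ ($\Sigma_{\rm DNA}=\{\mathrm A,\mathrm T,\mathrm C,\mathrm G\}$), $\mathrm{wt}_{\rm GC}(\boldsymbol{x})$ is the number of positions equal to G or C. If $s_0\mid n$ and $\boldsymbol{x}=(\boldsymbol{x}^{(1)},\dots,\boldsymbol{x}^{(n/s_0)})$ with $\boldsymbol{x}^{(i)}=(x_{(i-1)s_0+1},\dots,x_{is_0})$, then $\boldsymbol{x}$ is GC-$(s_0,\epsilon)$-partition balanced if $|\mathrm{wt}_{\rm GC}(\boldsymbol{x}^{(i)})/s_0-0.5|\le\epsilon$ for all $i\in[n/s_0]$. For $s<n$ (or $s\le n$), $\boldsymbol{x}$ is GC-$(s,\delta)$-locally balanced if for every $i\in[n-s+1]$ the window $\boldsymbol{x}_i=(x_i,\dots,x_{i+s-1})$ satisfies $|\mathrm{wt}_{\rm GC}(\boldsymbol{x}_i)/s-0.5|\le\delta$. *)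

theory Defs
  imports Complex_Main
begin

datatype dna = A | T | C | G

definition is_GC :: "dna \<Rightarrow> bool" where
  "is_GC x \<longleftrightarrow> x = G \<or> x = C"

definition wt_GC :: "dna list \<Rightarrow> nat" where
  "wt_GC x = length (filter is_GC x)"

text \<open>Window of length s starting at 1-based position i: (x_i, ..., x_{i+s-1}).\<close>
definition window :: "dna list \<Rightarrow> nat \<Rightarrow> nat \<Rightarrow> dna list" where
  "window x i s = take s (drop (i - 1) x)"

definition GC_partition_balanced :: "nat \<Rightarrow> real \<Rightarrow> dna list \<Rightarrow> bool" where
  "GC_partition_balanced s0 eps x \<longleftrightarrow>
     s0 dvd length x \<and>
     (\<forall>i\<in>{1..length x div s0}.
        \<bar>real (wt_GC (window x ((i - 1) * s0 + 1) s0)) / real s0 - 1/2\<bar> \<le> eps)"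

definition GC_locally_balanced :: "nat \<Rightarrow> real \<Rightarrow> dna list \<Rightarrow> bool" where
  "GC_locally_balanced s delta x \<longleftrightarrow>
     (\<forall>i\<in>{1..length x - s + 1}.
        \<bar>real (wt_GC (window x i s)) / real s - 1/2\<bar> \<le> delta)"

end

theory Submission
  imports Defs
begin

text \<open>Split a window into a partial block at each end and the aligned blocks of length \<open>s\<^sub>0\<close>
  in between. Each aligned block deviates from half GC content by at most \<open>\<epsilon> s\<^sub>0\<close>, so the
  middle part of length \<open>m\<close> deviates by at most \<open>\<epsilon> m\<close>; each partial block, of length at most
  \<open>s\<^sub>0 - 1\<close>, deviates by at most half its length. Adding up, the deviation of the window is at
  most \<open>(a + b)(1/2 - \<epsilon>) + \<epsilon> s \<le> (s\<^sub>0 - 1)(1 - 2\<epsilon>) + \<epsilon> s\<close>.\<close>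

definition GC_indicator :: "dna list \<Rightarrow> nat \<Rightarrow> real" where
  "GC_indicator c j = of_bool (is_GC (c ! j))"

lemma wt_GC_take_drop:
  assumes "k + s \<le> length c"
  shows "real (wt_GC (take s (drop k c))) = (\<Sum>j=k..<k+s. GC_indicator c j)"
  using assms
proof (induction s)
  case 0
  then show ?case by (simp add: wt_GC_def)
next
  case (Suc s)
  then have "take (Suc s) (drop k c) = take s (drop k c) @ [c ! (k + s)]"
    by (simp add: take_Suc_conv_app_nth)
  with Suc show ?case by (simp add: wt_GC_def GC_indicator_def)
qed

lemma sum_unit_interval_deviation:
  fixes f :: "nat \<Rightarrow> real"
  assumes "\<And>j. 0 \<le> f j \<and> f j \<le> 1"
  shows "\<bar>(\<Sum>j=a..<b. f j) - real (b - a) / 2\<bar> \<le> real (b - a) / 2"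
proof -
  have "0 \<le> (\<Sum>j=a..<b. f j)" by (rule sum_nonneg) (use assms in blast)
  moreover have "(\<Sum>j=a..<b. f j) \<le> (\<Sum>j=a..<b. 1)" by (rule sum_mono) (use assms in blast)
  ultimately show ?thesis unfolding abs_le_iff by simp
qed

lemma sum_atLeastLessThan_blocks:
  fixes f :: "nat \<Rightarrow> 'a::comm_monoid_add"
  assumes "q1 \<le> q2"
  shows "(\<Sum>j=q1*d..<q2*d. f j) = (\<Sum>q=q1..<q2. \<Sum>j=q*d..<q*d+d. f j)"
  using assms
proof (induction q2 rule: dec_induct)
  case base
  then show ?case by simp
next
  case (step q)
  have "(\<Sum>j=q1*d..<Suc q*d. f j) = (\<Sum>j=q1*d..<q*d. f j) + (\<Sum>j=q*d..<q*d+d. f j)"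
    using step.hyps sum.atLeastLessThan_concat[of "q1*d" "q*d" "q*d+d" f] by (simp add: add.commute)
  with step.IH step.hyps show ?case by (simp add: atLeastLessThanSuc ac_simps)
qed

lemma sum_blocks_deviation:
  fixes f :: "nat \<Rightarrow> real"
  assumes "q1 \<le> q2"
    and block: "\<And>q. q \<in> {q1..<q2} \<Longrightarrow> \<bar>(\<Sum>j=q*d..<q*d+d. f j) - real d / 2\<bar> \<le> eps * real d"
  shows "\<bar>(\<Sum>j=q1*d..<q2*d. f j) - real (q2*d - q1*d) / 2\<bar> \<le> eps * real (q2*d - q1*d)"
proof -
  have len: "real (q2*d - q1*d) = (\<Sum>q=q1..<q2. real d)"
    using assms(1) by (simp add: of_nat_diff diff_mult_distrib[symmetric])
  have "\<bar>(\<Sum>j=q1*d..<q2*d. f j) - real (q2*d - q1*d) / 2\<bar>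
      = \<bar>\<Sum>q=q1..<q2. (\<Sum>j=q*d..<q*d+d. f j) - real d / 2\<bar>"
    unfolding sum_atLeastLessThan_blocks[OF assms(1)] len sum_divide_distrib sum_subtractf ..
  also have "\<dots> \<le> (\<Sum>q=q1..<q2. eps * real d)"
    by (rule order_trans[OF sum_abs sum_mono]) (rule block)
  also have "\<dots> = eps * real (q2*d - q1*d)"
    by (simp add: len sum_distrib_left)
  finally show ?thesis .
qed

lemma partition_balanced_block_deviation:
  assumes "GC_partition_balanced s0 eps c" "0 < s0" "(q + 1) * s0 \<le> length c"
  shows "\<bar>(\<Sum>j=q*s0..<q*s0+s0. GC_indicator c j) - real s0 / 2\<bar> \<le> eps * real s0"
proof -
  have "q + 1 \<le> length c div s0"
    using div_le_mono[OF assms(3), of s0] assms(2) by simp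
  then have "\<bar>real (wt_GC (window c (q * s0 + 1) s0)) / real s0 - 1/2\<bar> \<le> eps"
    using assms(1) unfolding GC_partition_balanced_def by force
  moreover have "real (wt_GC (window c (q * s0 + 1) s0)) = (\<Sum>j=q*s0..<q*s0+s0. GC_indicator c j)"
    using assms(3) by (simp add: window_def wt_GC_take_drop add.commute)
  ultimately have "\<bar>((\<Sum>j=q*s0..<q*s0+s0. GC_indicator c j) - real s0 / 2) / real s0\<bar> \<le> eps"
    using assms(2) by (simp add: diff_divide_distrib)
  then show ?thesis
    using assms(2) by (simp add: abs_divide pos_divide_le_eq)
qed

lemma obtain_aligned_blocks:
  fixes k s d :: nat
  assumes "0 < d" "d \<le> s"
  obtains q1 q2 where "k \<le> q1 * d" "q1 * d < k + d" "q1 \<le> q2"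
    "q2 * d \<le> k + s" "k + s < q2 * d + d"
proof -
  define q1 where "q1 = (k + d - 1) div d"
  define q2 where "q2 = (k + s) div d"
  have q1: "q1 * d \<le> k + d - 1" "k + d - 1 < q1 * d + d"
    unfolding q1_def using assms(1) div_times_less_eq_dividend[of "k + d - 1" d]
      mod_less_divisor[of d "k + d - 1"] div_mult_mod_eq[of "k + d - 1" d] by linarith+
  have q2: "q2 * d \<le> k + s" "k + s < q2 * d + d"
    unfolding q2_def using assms(1) div_times_less_eq_dividend[of "k + s" d]
      mod_less_divisor[of d "k + s"] div_mult_mod_eq[of "k + s" d] by linarith+
  have "q1 * d < Suc q2 * d"
    using q1(1) q2(2) assms by (simp; linarith)
  then have "q1 \<le> q2"
    by (simp only: mult_less_cancel2) simp
  then show ?thesis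
    by (rule that[rotated 2]) (use q1 q2 assms(1) in linarith)+
qed

lemma split_deviation_bound:
  fixes L M R eps :: real and a b m s0 :: nat
  assumes "\<bar>L - real a / 2\<bar> \<le> real a / 2" "\<bar>M - real m / 2\<bar> \<le> eps * real m"
    "\<bar>R - real b / 2\<bar> \<le> real b / 2" "a + 1 \<le> s0" "b + 1 \<le> s0" "eps \<le> 1/2"
  shows "\<bar>L + M + R - real (a + m + b) / 2\<bar> \<le> (real s0 - 1) * (1 - 2 * eps) + eps * real (a + m + b)"
proof -
  have "(real a + real b) * (1/2 - eps) \<le> (2 * real s0 - 2) * (1/2 - eps)"
    by (rule mult_right_mono) (use assms(4-6) in auto)
  also have "\<dots> = (real s0 - 1) * (1 - 2 * eps)"
    by (simp add: algebra_simps)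
  finally have ab: "(real a + real b) * (1/2 - eps) \<le> (real s0 - 1) * (1 - 2 * eps)" .
  have "\<bar>L + M + R - real (a + m + b) / 2\<bar> = \<bar>(L - real a / 2) + (M - real m / 2) + (R - real b / 2)\<bar>"
    by (rule arg_cong[of _ _ abs]) (simp add: field_simps)
  also have "\<dots> \<le> \<bar>L - real a / 2\<bar> + \<bar>M - real m / 2\<bar> + \<bar>R - real b / 2\<bar>"
    using abs_triangle_ineq[of "L - real a / 2 + (M - real m / 2)" "R - real b / 2"]
      abs_triangle_ineq[of "L - real a / 2" "M - real m / 2"] by linarith
  also have "\<dots> \<le> real a / 2 + eps * real m + real b / 2"
    using assms(1-3) by (intro add_mono)
  also have "\<dots> = (real a + real b) * (1/2 - eps) + eps * real (a + m + b)"
    by (simp add: algebra_simps)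
  finally show ?thesis using ab by linarith
qed

lemma partition_balanced_window_deviation:
  assumes "GC_partition_balanced s0 eps c" "0 < s0" "s0 \<le> s" "k + s \<le> length c" "eps \<le> 1/2"
  shows "\<bar>(\<Sum>j=k..<k+s. GC_indicator c j) - real s / 2\<bar> \<le> (real s0 - 1) * (1 - 2 * eps) + eps * real s"
proof -
  obtain q1 q2 where q: "k \<le> q1 * s0" "q1 * s0 < k + s0" "q1 \<le> q2"
    "q2 * s0 \<le> k + s" "k + s < q2 * s0 + s0"
    using obtain_aligned_blocks assms(2,3) by blast
  let ?f = "GC_indicator c"
  have "q1 * s0 \<le> q2 * s0" using q(3) by simp
  then have split: "(\<Sum>j=k..<k+s. ?f j)
      = (\<Sum>j=k..<q1*s0. ?f j) + (\<Sum>j=q1*s0..<q2*s0. ?f j) + (\<Sum>j=q2*s0..<k+s. ?f j)"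
    using q by (metis sum.atLeastLessThan_concat le_trans)
  have len: "s = (q1*s0 - k) + (q2*s0 - q1*s0) + (k + s - q2*s0)"
    using q \<open>q1 * s0 \<le> q2 * s0\<close> by linarith
  have unit: "\<And>j. 0 \<le> ?f j \<and> ?f j \<le> 1" by (simp add: GC_indicator_def)
  have "\<bar>(\<Sum>j=q1*s0..<q2*s0. ?f j) - real (q2*s0 - q1*s0) / 2\<bar> \<le> eps * real (q2*s0 - q1*s0)"
  proof (rule sum_blocks_deviation[OF q(3)])
    fix q assume "q \<in> {q1..<q2}"
    then have "(q + 1) * s0 \<le> length c"
      using q(4) assms(4) mult_le_mono1[of "q + 1" q2 s0] by auto
    then show "\<bar>(\<Sum>j=q*s0..<q*s0+s0. ?f j) - real s0 / 2\<bar> \<le> eps * real s0"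
      using partition_balanced_block_deviation assms(1,2) by blast
  qed
  moreover have "q1*s0 - k + 1 \<le> s0" "k + s - q2*s0 + 1 \<le> s0"
    using q by linarith+
  ultimately have "\<bar>(\<Sum>j=k..<k+s. ?f j) - real ((q1*s0 - k) + (q2*s0 - q1*s0) + (k + s - q2*s0)) / 2\<bar>
      \<le> (real s0 - 1) * (1 - 2 * eps) + eps * real ((q1*s0 - k) + (q2*s0 - q1*s0) + (k + s - q2*s0))"
    unfolding split
    by (rule split_deviation_bound[OF sum_unit_interval_deviation[OF unit] _
          sum_unit_interval_deviation[OF unit] _ _ assms(5)])
  then show ?thesis
    by (simp only: len[symmetric])
qed

theorem lemma7:
  fixes eps :: real and n s s0 :: nat and c :: "dna list"
  assumes "0 < eps" and "eps < 1/2"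
    and "s0 dvd n" and "s \<le> n" and "2 * s0 < s"
    and "length c = n"
    and "GC_partition_balanced s0 eps c"
  shows "GC_locally_balanced s ((real s0 - 1) * (1 - 2 * eps) / real s + eps) c"
  unfolding GC_locally_balanced_def
proof
  fix i assume i: "i \<in> {1..length c - s + 1}"
  have s0: "0 < s0" using assms(3-5) by (cases "s0 = 0") auto
  have fits: "(i - 1) + s \<le> length c" using i assms(4,6) by auto
  have "\<bar>real (wt_GC (window c i s)) - real s / 2\<bar> \<le> (real s0 - 1) * (1 - 2 * eps) + eps * real s"
    using partition_balanced_window_deviation[OF assms(7) s0 _ fits] assms(2,5)
      wt_GC_take_drop[OF fits] by (simp add: window_def)
  moreover have "0 < real s" using assms(5) by simp
  ultimately show "\<bar>real (wt_GC (window c i s)) / real s - 1/2\<bar> \<le> (real s0 - 1) * (1 - 2 * eps) / real s + eps"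
    by (simp add: abs_le_iff field_simps)
qed

end
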